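(* For any hypothesis class $\mathcal{H}\subseteq\{0,1\}^{\mathcal{X}}$ and time horizon $T$, $$\sqrt{\frac{\operatorname{L}(\mathcal{H})\,T}{8}} \;\le\; \inf_{\mathcal{A}}\operatorname{R}_{\mathcal{A}}(T,\mathcal{H}) \;\le\; 3\sqrt{\operatorname{L}(\mathcal{H})\,T\ln T},$$ where the infimum is over all (possibly randomized) online learners operating under apple tasting feedback.
   Context: Online binary classification: over rounds $t=1,\dots,T$, an adversary picks $(x_t,y_t)\in\mathcal{X}\times\{0,1\}$ and reveals $x_t$; the learner $\mathcal{A}$ (possibly randomized) outputs $\hat y_t=\mathcal{A}(x_t)\in\{0,1\}$ based on the history; under apple tasting feedback the learner observes $y_t$ only if $\hat y_t=1$. The expected regret is $\operatorname{R}_{\mathcal{A}}(T,\mathcal{H}) := \sup_{(x_1,y_1),\dots,(x_T,y_T)}\Bigl(\mathbb{E}\bigl[\sum_{t=1}^T\mathbb{1}\{\mathcal{A}(x_t)\ne y_t\}\bigr] - \inf_{h\in\mathcal{H}}\sum_{t=1}^T\mathbb{1}\{h(x_t)\neq y_t\}\Bigr)$, expectation over the learner's randomness. The Littlestone dimension $\operatorname{L}(\mathcal{H})$ is the largest $d$ such that there is a complete binary tree of depth $d$ whose internal nodes are labeled by instances of $\mathcal{X}$ and which is shattered by $\mathcal{H}$: for every root-to-leaf path $\sigma\in\{0,1\}^d$ (with $x_i$ the instance at the node reached by prefix $\sigma_1\dots\sigma_{i-1}$) some $h\in\mathcal{H}$ satisfies $h(x_i)=\sigma_i$ for all $i$;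 $\operatorname{L}(\mathcal{H})=\infty$ if arbitrarily deep such trees exist. *)

theory Defs
  imports Complex_Main "HOL-Library.Extended_Nat"
begin

text \<open>Littlestone dimension. A complete binary tree of depth d with internal
nodes labelled by instances is a map from (prefixes of) root-to-node paths,
i.e. bool lists, to instances.\<close>

definition shatters_depth :: "('x \<Rightarrow> bool) set \<Rightarrow> nat \<Rightarrow> bool" where
  "shatters_depth H d \<longleftrightarrow>
     (\<exists>tree :: bool list \<Rightarrow> 'x. \<forall>\<sigma>. length \<sigma> = d \<longrightarrow>
        (\<exists>h\<in>H. \<forall>i<d. h (tree (take i \<sigma>)) = \<sigma> ! i))"

definition ldim :: "('x \<Rightarrow> bool) set \<Rightarrow> enat" where
  "ldim H = Sup {enat d | d. shatters_depth H d}"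

text \<open>History available to an apple-tasting learner: per past round, the
instance, its own prediction, and the label (observed only if prediction = 1).\<close>
type_synonym 'x history = "('x \<times> bool \<times> bool option) list"

text \<open>A randomized learner (behavioural strategy): given the history and the
current instance, the probability of predicting 1.\<close>
type_synonym 'x learner = "'x history \<Rightarrow> 'x \<Rightarrow> real"

definition valid_learner :: "'x learner \<Rightarrow> bool" where
  "valid_learner A \<longleftrightarrow> (\<forall>h x. 0 \<le> A h x \<and> A h x \<le> 1)"

fun exp_mistakes :: "'x learner \<Rightarrow> 'x history \<Rightarrow> ('x \<times> bool) list \<Rightarrow> real" where
  "exp_mistakes A hist [] = 0"
| "exp_mistakes A hist ((x, y) # rest) =
     A hist x * ((if y then 0 else 1) + exp_mistakes A (hist @ [(x, True, Some y)]) rest)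
   + (1 - A hist x) * ((if y then 1 else 0) + exp_mistakes A (hist @ [(x, False, None)]) rest)"

definition mistakes :: "('x \<Rightarrow> bool) \<Rightarrow> ('x \<times> bool) list \<Rightarrow> nat" where
  "mistakes h s = length (filter (\<lambda>(x, y). h x \<noteq> y) s)"

definition regret :: "'x learner \<Rightarrow> nat \<Rightarrow> ('x \<Rightarrow> bool) set \<Rightarrow> real" where
  "regret A T H = (SUP s \<in> {s :: ('x \<times> bool) list. length s = T}.
      exp_mistakes A [] s - real (INF h \<in> H. mistakes h s))"

definition minimax_regret :: "nat \<Rightarrow> ('x \<Rightarrow> bool) set \<Rightarrow> real" where
  "minimax_regret T H = (INF A \<in> {A :: 'x learner. valid_learner A}. regret A T H)"

end

theory Submission
  imports Defs
begin

(* Lower bound: split the T rounds into d blocks of almost equal length k. In each block the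
   adversary repeats the current node of a shattered tree with uniformly random labels and then
   moves to the child given by the majority label of the block. Every learner errs T/2 times in
   expectation, while the hypothesis following the majorities errs only on the minority labels,
   k/2 - E|S_k|/2 per block for the simple random walk S_k; the bound E|S_k| >= sqrt(ceil(k/2)),
   which comes from the central binomial coefficient, yields regret at least sqrt(dT/8).

   Upper bound: each h in H agrees on the sample with one of at most (T+1)^d experts, each of
   which runs Littlestone's SOA on its own predictions and flips it in a set of at most d rounds
   (SOA errs at most d times). Exponential weights over these experts, fed with an importance
   weighted estimate of the relative loss of predicting 1 (the label is only seen after
   predicting 1), has regret at most ln N / eta + 2 eta T; tuning eta gives 3 sqrt(dT ln T). *)

section \<open>Littlestone dimension and the Standard Optimal Algorithm\<close>

lemma shatters_depth_subset:
  assumes "shatters_depth V k" "V \<subseteq> W"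
  shows "shatters_depth W k"
proof -
  obtain tree where "\<And>\<sigma>. length \<sigma> = k \<Longrightarrow> \<exists>h\<in>V. \<forall>i<k. h (tree (take i \<sigma>)) = \<sigma> ! i"
    using assms(1) unfolding shatters_depth_def by blast
  then show ?thesis
    unfolding shatters_depth_def using assms(2) by (intro exI[of _ tree]) blast
qed

lemma shatters_depth_le:
  assumes "shatters_depth V k" "k' \<le> k"
  shows "shatters_depth V k'"
proof -
  obtain tree where tree: "\<And>\<sigma>. length \<sigma> = k \<Longrightarrow> \<exists>h\<in>V. \<forall>i<k. h (tree (take i \<sigma>)) = \<sigma> ! i"
    using assms(1) unfolding shatters_depth_def by blast
  show ?thesis unfolding shatters_depth_def
  proof (intro exI[of _ tree] allI impI)
    fix \<sigma> :: "bool list" assume len: "length \<sigma> = k'"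
    let ?\<sigma> = "\<sigma> @ replicate (k - k') False"
    have "length ?\<sigma> = k" using len assms(2) by simp
    then obtain h where h: "h \<in> V" "\<forall>i<k. h (tree (take i ?\<sigma>)) = ?\<sigma> ! i"
      by (blast dest: tree)
    have "h (tree (take i \<sigma>)) = \<sigma> ! i" if "i < k'" for i
    proof -
      have "take i ?\<sigma> = take i \<sigma>" "?\<sigma> ! i = \<sigma> ! i"
        using that len by (simp_all add: nth_append)
      moreover have "i < k" using that assms(2) by simp
      then have "h (tree (take i ?\<sigma>)) = ?\<sigma> ! i" using h(2) by blast
      ultimately show ?thesis by (simp only:)
    qed
    then show "\<exists>h\<in>V. \<forall>i<k'. h (tree (take i \<sigma>)) = \<sigma> ! i" using h(1) by blast
  qed
qed

lemma shatters_depth_0_iff: "shatters_depth V 0 \<longleftrightarrow> V \<noteq> {}"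
  unfolding shatters_depth_def by auto

lemma shatters_depth_SucI:
  assumes "shatters_depth {h \<in> V. h x} k" "shatters_depth {h \<in> V. \<not> h x} k"
  shows "shatters_depth V (Suc k)"
proof -
  obtain t1 where t1: "\<And>\<sigma>. length \<sigma> = k \<Longrightarrow> \<exists>h\<in>{h \<in> V. h x}. \<forall>i<k. h (t1 (take i \<sigma>)) = \<sigma> ! i"
    using assms(1) unfolding shatters_depth_def by blast
  obtain t0 where t0: "\<And>\<sigma>. length \<sigma> = k \<Longrightarrow> \<exists>h\<in>{h \<in> V. \<not> h x}. \<forall>i<k. h (t0 (take i \<sigma>)) = \<sigma> ! i"
    using assms(2) unfolding shatters_depth_def by blast
  define tree where "tree \<sigma> = (case \<sigma> of [] \<Rightarrow> x | b # \<sigma>' \<Rightarrow> if b then t1 \<sigma>' else t0 \<sigma>')" for \<sigma>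
  show ?thesis unfolding shatters_depth_def
  proof (intro exI[of _ tree] allI impI)
    fix \<tau> :: "bool list" assume "length \<tau> = Suc k"
    then obtain b \<sigma> where \<tau>: "\<tau> = b # \<sigma>" and len: "length \<sigma> = k"
      by (cases \<tau>) auto
    have "\<exists>h\<in>V. h x = b \<and> (\<forall>i<k. h ((if b then t1 else t0) (take i \<sigma>)) = \<sigma> ! i)"
      using t1[OF len] t0[OF len] by (cases b) auto
    then obtain h where h: "h \<in> V" "h x = b" "\<forall>i<k. h ((if b then t1 else t0) (take i \<sigma>)) = \<sigma> ! i"
      by blast
    have "h (tree (take i \<tau>)) = \<tau> ! i" if "i < Suc k" for i
    proof (cases i)
      case 0
      then show ?thesis using h(2) by (simp add: \<tau> tree_def)
    next
      case (Suc j)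
      then have "h ((if b then t1 else t0) (take j \<sigma>)) = \<sigma> ! j" using h(3) that by simp
      moreover have "tree (take i \<tau>) = (if b then t1 else t0) (take j \<sigma>)"
        using Suc by (simp add: \<tau> tree_def)
      ultimately show ?thesis using Suc by (simp add: \<tau>)
    qed
    then show "\<exists>h\<in>V. \<forall>i<Suc k. h (tree (take i \<tau>)) = \<tau> ! i" using h(1) by blast
  qed
qed

lemma
  assumes "H \<noteq> {}" "ldim H = enat d"
  shows shatters_depth_le_ldim: "shatters_depth H k \<Longrightarrow> k \<le> d"
    and shatters_depth_ldim: "shatters_depth H d"
proof -
  show le: "k \<le> d" if "shatters_depth H k" for k
  proof -
    have "enat k \<le> ldim H"
      unfolding ldim_def using that by (intro Sup_upper) auto
    then show ?thesis using assms(2) by simp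
  qed
  let ?K = "{k. shatters_depth H k}"
  have "finite ?K" "?K \<noteq> {}"
    using le assms(1) shatters_depth_0_iff by (auto intro: finite_subset[of _ "{..d}"])
  moreover have "ldim H = Max (enat ` ?K)"
    unfolding ldim_def using calculation by (simp add: cSup_eq_Max setcompr_eq_image)
  moreover have "Max (enat ` ?K) \<in> enat ` ?K"
    using calculation by (intro Max_in) auto
  ultimately have "enat d \<in> enat ` ?K"
    using assms(2) by simp
  then show "shatters_depth H d" by auto
qed

definition version_space :: "('x \<Rightarrow> bool) set \<Rightarrow> ('x \<Rightarrow> bool) \<Rightarrow> 'x list \<Rightarrow> ('x \<Rightarrow> bool) set" where
  "version_space V h xs = {g \<in> V. \<forall>x \<in> set xs. g x = h x}"

lemma version_space_Nil [simp]: "version_space V h [] = V"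
  by (simp add: version_space_def)

lemma version_space_snoc:
  "version_space V h (xs @ [x]) = {g \<in> version_space V h xs. g x = h x}"
  by (auto simp: version_space_def)

lemma version_space_subset: "version_space V h xs \<subseteq> V"
  by (auto simp: version_space_def)

lemma self_in_version_space: "h \<in> V \<Longrightarrow> h \<in> version_space V h xs"
  by (simp add: version_space_def)

locale bounded_ldim =
  fixes H :: "('x \<Rightarrow> bool) set" and d :: nat
  assumes shatters_depth_le_bound: "shatters_depth H k \<Longrightarrow> k \<le> d"
begin

text \<open>For nonempty \<open>V \<subseteq> H\<close> the rank is \<open>ldim V + 1\<close>; it is \<open>0\<close> for \<open>V = {}\<close>.\<close>

definition rank :: "('x \<Rightarrow> bool) set \<Rightarrow> nat" where
  "rank V = card {k \<in> {..d}. shatters_depth V k}"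

lemma shatters_depth_iff_less_rank:
  assumes "V \<subseteq> H"
  shows "shatters_depth V k \<longleftrightarrow> k < rank V"
proof -
  let ?S = "{k \<in> {..d}. shatters_depth V k}"
  have le_d: "shatters_depth V k \<Longrightarrow> k \<le> d" for k
    using assms shatters_depth_le_bound shatters_depth_subset by blast
  show ?thesis
  proof (cases "?S = {}")
    case True
    then have "rank V = 0" unfolding rank_def by (simp only: card.empty)
    then show ?thesis using True le_d by auto
  next
    case False
    define m where "m = Max ?S"
    have "m \<in> ?S" unfolding m_def using False by (intro Max_in) auto
    then have "?S = {..m}"
      using le_d by (auto simp: m_def intro: shatters_depth_le)
    then show ?thesis
      using le_d by (auto simp: rank_def less_Suc_eq_le)
  qed
qed

lemma rank_mono: "V' \<subseteq> V \<Longrightarrow> rank V' \<le> rank V"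
  unfolding rank_def by (rule card_mono) (auto intro: shatters_depth_subset)

lemma rank_le_Suc: "rank V \<le> Suc d"
proof -
  have "rank V \<le> card {..d}" unfolding rank_def by (rule card_mono) auto
  then show ?thesis by simp
qed

lemma rank_pos: "V \<subseteq> H \<Longrightarrow> V \<noteq> {} \<Longrightarrow> 0 < rank V"
  using shatters_depth_iff_less_rank shatters_depth_0_iff by blast

definition soa :: "('x \<Rightarrow> bool) set \<Rightarrow> 'x \<Rightarrow> bool" where
  "soa V x \<longleftrightarrow> rank {h \<in> V. \<not> h x} \<le> rank {h \<in> V. h x}"

lemma rank_less_if_soa_wrong:
  assumes "V \<subseteq> H" "g \<in> V" "g x \<noteq> soa V x"
  shows "rank {h \<in> V. h x = g x} < rank V"
proof -
  let ?W = "{h \<in> V. h x = g x}" and ?W' = "{h \<in> V. h x \<noteq> g x}"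
  have sub: "?W \<subseteq> H" "?W' \<subseteq> H" using assms(1) by auto
  have "0 < rank ?W" using rank_pos[OF sub(1)] assms(2) by blast
  then obtain m where m: "rank ?W = Suc m" using gr0_conv_Suc by blast
  have "rank ?W \<le> rank ?W'"
    using assms(3) by (cases "g x") (auto simp: soa_def)
  then have "shatters_depth ?W m" "shatters_depth ?W' m"
    using m shatters_depth_iff_less_rank[OF sub(1)] shatters_depth_iff_less_rank[OF sub(2)] by auto
  then have "shatters_depth V (Suc m)"
    by (cases "g x") (auto intro: shatters_depth_SucI)
  then show ?thesis
    using m shatters_depth_iff_less_rank assms(1) by auto
qed

definition soa_mistakes :: "('x \<Rightarrow> bool) \<Rightarrow> 'x list \<Rightarrow> nat set" where
  "soa_mistakes h xs = {t. t < length xs \<and> soa (version_space H h (take t xs)) (xs ! t) \<noteq> h (xs ! t)}"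

lemma soa_mistakes_snoc:
  "soa_mistakes h (xs @ [x]) =
     soa_mistakes h xs \<union> (if soa (version_space H h xs) x = h x then {} else {length xs})"
  by (auto simp: soa_mistakes_def nth_append less_Suc_eq)

lemma rank_version_space_add_card_soa_mistakes:
  assumes "h \<in> H"
  shows "rank (version_space H h xs) + card (soa_mistakes h xs) \<le> rank H"
proof (induction xs rule: rev_induct)
  case Nil
  then show ?case by (simp add: soa_mistakes_def)
next
  case (snoc x xs)
  let ?V = "version_space H h xs"
  have V: "?V \<subseteq> H" "h \<in> ?V"
    using assms by (auto simp: version_space_subset self_in_version_space)
  have fin: "finite (soa_mistakes h xs)" "length xs \<notin> soa_mistakes h xs"
    by (auto simp: soa_mistakes_def)
  show ?case
  proof (cases "soa ?V x = h x")
    case True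
    have "rank (version_space H h (xs @ [x])) \<le> rank ?V"
      by (auto simp: version_space_snoc intro: rank_mono)
    then show ?thesis using snoc True by (simp add: soa_mistakes_snoc)
  next
    case False
    then have "h x \<noteq> soa ?V x" by simp
    then have "rank (version_space H h (xs @ [x])) < rank ?V"
      using rank_less_if_soa_wrong[OF V] by (simp add: version_space_snoc)
    then show ?thesis using snoc False fin by (simp add: soa_mistakes_snoc)
  qed
qed

theorem card_soa_mistakes_le:
  assumes "h \<in> H"
  shows "card (soa_mistakes h xs) \<le> d"
  using rank_version_space_add_card_soa_mistakes[OF assms, of xs] rank_le_Suc[of H]
    rank_pos[OF version_space_subset] self_in_version_space[OF assms, of xs]
  by fastforce

text \<open>The expert indexed by a set \<open>M\<close> of rounds runs SOA on its own past predictions as labels,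
  and flips the SOA prediction in the rounds belonging to \<open>M\<close>.\<close>

definition expert_step :: "nat set \<Rightarrow> ('x \<Rightarrow> bool) set \<Rightarrow> nat \<Rightarrow> 'x \<Rightarrow> bool" where
  "expert_step M V t x = (if t \<in> M then \<not> soa V x else soa V x)"

fun expert_space :: "nat set \<Rightarrow> ('x \<Rightarrow> bool) set \<Rightarrow> nat \<Rightarrow> 'x list \<Rightarrow> ('x \<Rightarrow> bool) set" where
  "expert_space M V t [] = V"
| "expert_space M V t (x # xs) = expert_space M {h \<in> V. h x = expert_step M V t x} (Suc t) xs"

definition expert :: "nat set \<Rightarrow> 'x list \<Rightarrow> 'x \<Rightarrow> bool" where
  "expert M xs x = expert_step M (expert_space M H 0 xs) (length xs) x"

lemma expert_space_snoc:
  "expert_space M V t (xs @ [x]) =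
     {h \<in> expert_space M V t xs. h x = expert_step M (expert_space M V t xs) (t + length xs) x}"
  by (induction xs arbitrary: V t) auto

lemma expert_soa_mistakes:
  assumes "t < length xs"
  shows "expert (soa_mistakes h xs) (take t xs) (xs ! t) = h (xs ! t)"
proof -
  let ?M = "soa_mistakes h xs"
  have "expert_space ?M H 0 (take s xs) = version_space H h (take s xs)" if "s \<le> length xs" for s
    using that
  proof (induction s)
    case 0
    then show ?case by simp
  next
    case (Suc s)
    then have "expert_step ?M (version_space H h (take s xs)) s (xs ! s) = h (xs ! s)"
      by (auto simp: expert_step_def soa_mistakes_def)
    then show ?case
      using Suc by (simp add: take_Suc_conv_app_nth expert_space_snoc version_space_snoc)
  qed
  then show ?thesis
    using assms by (auto simp: expert_def expert_step_def soa_mistakes_def)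
qed

end

section \<open>Regret\<close>

lemma mistakes_Nil [simp]: "mistakes h [] = 0"
  by (simp add: mistakes_def)

lemma mistakes_Cons [simp]: "mistakes h ((x, y) # s) = (if h x = y then 0 else 1) + mistakes h s"
  by (simp add: mistakes_def)

lemma mistakes_append: "mistakes h (s @ s') = mistakes h s + mistakes h s'"
  by (simp add: mistakes_def)

lemma exp_mistakes_bounds:
  assumes "valid_learner A"
  shows "0 \<le> exp_mistakes A hist s \<and> exp_mistakes A hist s \<le> length s"
proof (induction s arbitrary: hist)
  case Nil
  then show ?case by simp
next
  case (Cons p s)
  obtain x y where p: "p = (x, y)" by (cases p)
  let ?a = "A hist x"
  let ?E1 = "exp_mistakes A (hist @ [(x, True, Some y)]) s"
  let ?E0 = "exp_mistakes A (hist @ [(x, False, None)]) s"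
  have a: "0 \<le> ?a" "?a \<le> 1" using assms by (auto simp: valid_learner_def)
  have E: "0 \<le> ?E1" "?E1 \<le> length s" "0 \<le> ?E0" "?E0 \<le> length s" using Cons by auto
  have "0 \<le> ?a * ((if y then 0 else 1) + ?E1) + (1 - ?a) * ((if y then 1 else 0) + ?E0)"
    using a E by (intro add_nonneg_nonneg mult_nonneg_nonneg) auto
  moreover have "?a * ((if y then 0 else 1) + ?E1) + (1 - ?a) * ((if y then 1 else 0) + ?E0)
      \<le> ?a * (1 + length s) + (1 - ?a) * (1 + length s)"
    using a E by (intro add_mono mult_left_mono) auto
  moreover have "exp_mistakes A hist (p # s)
      = ?a * ((if y then 0 else 1) + ?E1) + (1 - ?a) * ((if y then 1 else 0) + ?E0)"
    by (simp add: p)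
  moreover have "?a * (1 + length s) + (1 - ?a) * (1 + length s) = length (p # s)"
    by (simp add: algebra_simps)
  ultimately show ?case by linarith
qed

lemma sample_regret_le_regret:
  fixes H :: "('x \<Rightarrow> bool) set"
  assumes "valid_learner A" "length s = T"
  shows "exp_mistakes A [] s - real (INF h\<in>H. mistakes h s) \<le> regret A T H"
  unfolding regret_def
proof (rule cSUP_upper)
  show "bdd_above ((\<lambda>s. exp_mistakes A [] s - real (INF h\<in>H. mistakes h s)) ` {s. length s = T})"
  proof (rule bdd_aboveI2)
    fix s :: "('x \<times> bool) list" assume "s \<in> {s. length s = T}"
    then show "exp_mistakes A [] s - real (INF h\<in>H. mistakes h s) \<le> T"
      using exp_mistakes_bounds[OF assms(1), of "[]" s] by simp
  qed
qed (use assms in simp)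

lemma regret_le:
  fixes H :: "('x \<Rightarrow> bool) set"
  assumes "\<And>s. length s = T \<Longrightarrow> exp_mistakes A [] s - real (INF h\<in>H. mistakes h s) \<le> B"
  shows "regret A T H \<le> B"
  unfolding regret_def
proof (rule cSUP_least)
  have "replicate T undefined \<in> {s :: ('x \<times> bool) list. length s = T}" by simp
  then show "{s :: ('x \<times> bool) list. length s = T} \<noteq> {}" by blast
qed (use assms in simp)

lemma regret_nonneg:
  fixes H :: "('x \<Rightarrow> bool) set"
  assumes "valid_learner A" "H \<noteq> {}"
  shows "0 \<le> regret A T H"
proof -
  obtain h where h: "h \<in> H" using assms(2) by auto
  define s :: "('x \<times> bool) list" where "s = replicate T (undefined, h undefined)"
  have "(INF g\<in>H. mistakes g s) \<le> mistakes h s"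
    by (rule cINF_lower) (use h in auto)
  then have "(INF g\<in>H. mistakes g s) = 0"
    by (simp add: s_def mistakes_def)
  moreover have "length s = T" by (simp add: s_def)
  ultimately show ?thesis
    using sample_regret_le_regret[OF assms(1) \<open>length s = T\<close>, where H = H]
      exp_mistakes_bounds[OF assms(1), of "[]" s] by linarith
qed

lemma minimax_regret_le_regret:
  assumes "valid_learner A" "H \<noteq> {}"
  shows "minimax_regret T H \<le> regret A T H"
  unfolding minimax_regret_def
proof (rule cINF_lower)
  show "bdd_below ((\<lambda>A. regret A T H) ` {A. valid_learner A})"
    using regret_nonneg[OF _ assms(2)] by (intro bdd_belowI2[of _ 0]) auto
qed (use assms in simp)

lemma le_minimax_regret:
  assumes "\<And>A. valid_learner A \<Longrightarrow> c \<le> regret A T H"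
  shows "c \<le> minimax_regret T H"
proof -
  have "valid_learner (\<lambda>_ _. 0)" by (simp add: valid_learner_def)
  then show ?thesis
    unfolding minimax_regret_def using assms by (intro cINF_greatest) auto
qed

lemma minimax_regret_le_horizon:
  fixes H :: "('x \<Rightarrow> bool) set"
  assumes "H \<noteq> {}"
  shows "minimax_regret T H \<le> T"
proof -
  have valid: "valid_learner (\<lambda>_ _. 0)" by (simp add: valid_learner_def)
  have "regret (\<lambda>_ _. 0) T H \<le> T"
  proof (rule regret_le)
    fix s :: "('x \<times> bool) list" assume "length s = T"
    then show "exp_mistakes (\<lambda>_ _. 0) [] s - real (INF h\<in>H. mistakes h s) \<le> T"
      using exp_mistakes_bounds[OF valid, of "[]" s] by simp
  qed
  then show ?thesis using minimax_regret_le_regret[OF valid assms, of T] by linarith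
qed

section \<open>Exponential weights under apple tasting\<close>

lemma exp_le_quadratic_nonpos:
  fixes u :: real
  assumes "u \<le> 0"
  shows "exp u \<le> 1 + u + u\<^sup>2 / 2"
proof -
  have lower: "1 - u + u\<^sup>2 / 2 \<le> exp (- u)"
    using exp_lower_Taylor_quadratic[of "- u"] assms by simp
  have "0 \<le> u\<^sup>2 / 2" by simp
  then have pos: "0 < 1 - u + u\<^sup>2 / 2" using assms by linarith
  have "exp u = 1 / exp (- u)" by (simp add: exp_minus divide_inverse)
  also have "\<dots> \<le> 1 / (1 - u + u\<^sup>2 / 2)" using lower pos by (intro divide_left_mono) auto
  also have "\<dots> \<le> 1 + u + u\<^sup>2 / 2"
  proof -
    have "(1 + u + u\<^sup>2 / 2) * (1 - u + u\<^sup>2 / 2) = 1 + u ^ 4 / 4"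
      by (simp add: algebra_simps power2_eq_square power4_eq_xxxx)
    then show ?thesis using pos by (simp add: divide_le_eq)
  qed
  finally show ?thesis .
qed

lemma mixture_exp_pos:
  fixes q u :: real
  assumes "0 \<le> q" "q \<le> 1"
  shows "0 < 1 - q + q * exp u"
proof (cases "q = 0")
  case False
  then have "0 < q * exp u" using assms by simp
  then show ?thesis using assms by linarith
qed simp

lemma ln_mixture_exp_le:
  fixes q u :: real
  assumes "0 \<le> q" "q \<le> 1"
  shows "ln (1 - q + q * exp u) \<le> q * (exp u - 1)"
  using ln_le_minus_one[OF mixture_exp_pos[OF assms]] by (simp add: algebra_simps)

lemma ln_mixture_exp_le_pos:
  fixes q \<eta> :: real
  assumes "0 \<le> q" "q \<le> 1" "0 \<le> \<eta>" "\<eta> \<le> 1"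
  shows "ln (1 - q + q * exp \<eta>) \<le> q * (\<eta> + \<eta>\<^sup>2)"
proof -
  have "q * (exp \<eta> - 1) \<le> q * (\<eta> + \<eta>\<^sup>2)"
    using exp_bound[of \<eta>] assms by (intro mult_left_mono) auto
  then show ?thesis
    using ln_mixture_exp_le[OF assms(1,2), of \<eta>] by linarith
qed

lemma ln_mixture_exp_le_nonpos:
  fixes q u :: real
  assumes "0 \<le> q" "q \<le> 1" "u \<le> 0"
  shows "ln (1 - q + q * exp u) \<le> q * (u + u\<^sup>2 / 2)"
proof -
  have "q * (exp u - 1) \<le> q * (u + u\<^sup>2 / 2)"
    using exp_le_quadratic_nonpos[OF assms(3)] assms(1) by (intro mult_left_mono) auto
  then show ?thesis
    using ln_mixture_exp_le[OF assms(1,2), of u] by linarith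
qed

lemma ln_mixture_exp_div_le:
  fixes q \<eta> :: real
  assumes "0 \<le> q" "q \<le> 1" "0 < \<eta>" "\<eta> \<le> 1"
  shows "ln (1 - q + q * exp \<eta>) / \<eta> \<le> q + \<eta>"
proof -
  have "ln (1 - q + q * exp \<eta>) / \<eta> \<le> q + q * \<eta>"
    using ln_mixture_exp_le_pos[OF assms(1,2)] assms(3,4)
    by (simp add: divide_le_eq power2_eq_square algebra_simps)
  moreover have "q * \<eta> \<le> \<eta>" using assms by (simp add: mult_left_le_one_le)
  ultimately show ?thesis by linarith
qed

lemma ln_mixture_exp_importance_le:
  fixes q \<eta> :: real
  assumes "0 < q" "q \<le> 1" "0 < \<eta>" "\<eta> \<le> 1"
  shows "q * \<eta> + q * ln (1 - q + q * exp (\<eta> - 2 * \<eta> / q)) + (1 - q) * ln (1 - q + q * exp \<eta>)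
    \<le> 2 * \<eta>\<^sup>2"
proof -
  define u where "u = \<eta> - 2 * \<eta> / q"
  have qu: "q * u = q * \<eta> - 2 * \<eta>" using assms(1) by (simp add: u_def field_simps)
  have "q * \<eta> \<le> \<eta>" using assms by (simp add: mult_left_le_one_le)
  then have "q * u \<le> 0" using qu assms(3) by linarith
  then have "u \<le> 0" using assms(1) by (simp add: mult_le_0_iff)
  have "q * ln (1 - q + q * exp u) \<le> q * (q * (u + u\<^sup>2 / 2))"
    using ln_mixture_exp_le_nonpos[OF _ assms(2) \<open>u \<le> 0\<close>] assms(1) by (simp add: mult_left_mono)
  also have "\<dots> = q * (q * u) + (q * u)\<^sup>2 / 2"
    by (simp add: algebra_simps power2_eq_square)
  also have "\<dots> = q * (q * \<eta> - 2 * \<eta>) + (q * \<eta> - 2 * \<eta>)\<^sup>2 / 2"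
    by (simp only: qu)
  moreover have "(1 - q) * ln (1 - q + q * exp \<eta>) \<le> (1 - q) * (q * (\<eta> + \<eta>\<^sup>2))"
    using ln_mixture_exp_le_pos[of q \<eta>] assms by (intro mult_left_mono) auto
  ultimately have "q * \<eta> + q * ln (1 - q + q * exp u) + (1 - q) * ln (1 - q + q * exp \<eta>)
      \<le> q * \<eta> + (q * (q * \<eta> - 2 * \<eta>) + (q * \<eta> - 2 * \<eta>)\<^sup>2 / 2) + (1 - q) * (q * (\<eta> + \<eta>\<^sup>2))"
    by linarith
  also have "\<dots> = \<eta>\<^sup>2 * (2 - q - q\<^sup>2 / 2)"
    by (simp add: algebra_simps power2_eq_square divide_simps)
  also have "\<dots> \<le> \<eta>\<^sup>2 * 2"
  proof (rule mult_left_mono)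
    show "2 - q - q\<^sup>2 / 2 \<le> 2" using assms(1) zero_le_power2[of q] by linarith
  qed simp
  finally show ?thesis by (simp add: u_def)
qed

text \<open>One round of exponential weights under apple tasting: \<open>q\<close> is the probability of predicting 1,
  \<open>y\<close> the label, \<open>e\<close> the prediction of the comparator expert, and \<open>c\<close> the loss estimate charged
  to the experts predicting 1 after the learner predicted 1 (after predicting 0 it is \<open>-1\<close>).\<close>

lemma exp_weights_round_le:
  fixes q \<eta> :: real and e y :: bool
  assumes q: "0 \<le> q" "q \<le> 1" and \<eta>: "0 < \<eta>" "\<eta> \<le> 1" and "e \<Longrightarrow> 0 < q"
  defines "c \<equiv> (if y then 0 else 2 / q) - 1"
  shows "q * ((if y then 0 else 1) + ln (1 - q + q * exp (- \<eta> * c)) / \<eta> + (if e then c else 0))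
       + (1 - q) * ((if y then 1 else 0) + ln (1 - q + q * exp \<eta>) / \<eta> - (if e then 1 else 0))
     \<le> (if e = y then 0 else 1) + 2 * \<eta>"
proof (cases y)
  case True
  define L where "L = ln (1 - q + q * exp \<eta>) / \<eta>"
  have "- \<eta> * c = \<eta>" using True by (simp add: c_def)
  then have "q * ((if y then 0 else 1) + ln (1 - q + q * exp (- \<eta> * c)) / \<eta> + (if e then c else 0))
       + (1 - q) * ((if y then 1 else 0) + ln (1 - q + q * exp \<eta>) / \<eta> - (if e then 1 else 0))
       = L + (1 - q) - (if e then 1 else 0)"
    using True \<eta> by (simp add: L_def c_def field_simps)
  moreover have "L \<le> q + \<eta>" unfolding L_def by (rule ln_mixture_exp_div_le[OF q \<eta>])
  ultimately show ?thesis using True \<eta> by auto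
next
  case False
  show ?thesis
  proof (cases "q = 0")
    case True
    then show ?thesis using \<open>e \<Longrightarrow> 0 < q\<close> \<eta> by auto
  next
    case q0: False
    define S where "S = q * ln (1 - q + q * exp (\<eta> - 2 * \<eta> / q)) + (1 - q) * ln (1 - q + q * exp \<eta>)"
    have "(q * \<eta> + S) / \<eta> \<le> 2 * \<eta>\<^sup>2 / \<eta>"
      using ln_mixture_exp_importance_le[of q \<eta>] q q0 \<eta> by (simp add: S_def divide_right_mono add.assoc)
    then have "q + S / \<eta> \<le> 2 * \<eta>"
      using \<eta> by (simp add: power2_eq_square add_divide_distrib)
    moreover have "q * ((if y then 0 else 1) + ln (1 - q + q * exp (- \<eta> * c)) / \<eta> + (if e then c else 0))
        + (1 - q) * ((if y then 1 else 0) + ln (1 - q + q * exp \<eta>) / \<eta> - (if e then 1 else 0))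
        = q + S / \<eta> + (if e then 1 else 0)"
      using False q0 \<eta> by (simp add: S_def c_def field_simps)
    ultimately show ?thesis using False by simp
  qed
qed

locale apple_tasting_exp_weights =
  fixes I :: "'i set" and E :: "'i \<Rightarrow> 'x list \<Rightarrow> 'x \<Rightarrow> bool" and \<eta> :: real
  assumes finite_I: "finite I" and I_ne: "I \<noteq> {}" and eta_pos: "0 < \<eta>" and eta_le_1: "\<eta> \<le> 1"
begin

definition prob_one :: "('i \<Rightarrow> real) \<Rightarrow> 'x list \<Rightarrow> 'x \<Rightarrow> real" where
  "prob_one w xs x = (\<Sum>j\<in>I. if E j xs x then w j else 0) / (\<Sum>j\<in>I. w j)"

text \<open>Predicting 1 rather than 0 costs \<open>2 [y = 0] - 1\<close>. The label is seen only after predicting 1,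
  which happens with probability \<open>q\<close>; so, writing \<open>p\<close> for the prediction, \<open>2 [p \<and> y = 0] / q - 1\<close>
  is an unbiased estimate of this relative loss.\<close>

definition loss_estimate :: "('i \<Rightarrow> real) \<Rightarrow> 'x list \<Rightarrow> 'x \<times> bool \<times> bool option \<Rightarrow> real" where
  "loss_estimate w xs r =
     (case r of (x, p, l) \<Rightarrow> (if p \<and> l = Some False then 2 / prob_one w xs x else 0) - 1)"

fun weights_rev :: "'x history \<Rightarrow> 'i \<Rightarrow> real" where
  "weights_rev [] = (\<lambda>_. 1)"
| "weights_rev (r # rh) = (\<lambda>i. weights_rev rh i *
     exp (- \<eta> * (if E i (map fst (rev rh)) (fst r) then loss_estimate (weights_rev rh) (map fst (rev rh)) r else 0)))"

definition weights :: "'x history \<Rightarrow> 'i \<Rightarrow> real" where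
  "weights hist = weights_rev (rev hist)"

definition learner :: "'x learner" where
  "learner hist x = prob_one (weights hist) (map fst hist) x"

fun expert_mistakes :: "'i \<Rightarrow> 'x list \<Rightarrow> ('x \<times> bool) list \<Rightarrow> nat" where
  "expert_mistakes i xs [] = 0"
| "expert_mistakes i xs ((x, y) # s) = (if E i xs x = y then 0 else 1) + expert_mistakes i (xs @ [x]) s"

definition potential :: "'x history \<Rightarrow> 'i \<Rightarrow> real" where
  "potential hist i = (ln (\<Sum>j\<in>I. weights hist j) - ln (weights hist i)) / \<eta>"

lemma weights_Nil: "weights [] = (\<lambda>_. 1)"
  by (simp add: weights_def)

lemma weights_snoc:
  "weights (hist @ [r]) = (\<lambda>i. weights hist i *
     exp (- \<eta> * (if E i (map fst hist) (fst r) then loss_estimate (weights hist) (map fst hist) r else 0)))"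
  unfolding weights_def by (simp cong: if_cong)

lemma weights_pos: "0 < weights hist i"
  by (induction hist rule: rev_induct) (simp_all add: weights_Nil weights_snoc)

lemma sum_weights_pos: "0 < (\<Sum>j\<in>I. weights hist j)"
  using finite_I I_ne weights_pos by (simp add: sum_pos)

lemma prob_one_bounds:
  assumes "\<And>j. 0 < w j"
  shows "0 \<le> prob_one w xs x" "prob_one w xs x \<le> 1"
proof -
  have "0 < (\<Sum>j\<in>I. w j)" using finite_I I_ne assms by (simp add: sum_pos)
  moreover have "0 \<le> (\<Sum>j\<in>I. if E j xs x then w j else 0)"
    using assms by (intro sum_nonneg) (simp add: less_imp_le)
  moreover have "(\<Sum>j\<in>I. if E j xs x then w j else 0) \<le> (\<Sum>j\<in>I. w j)"
    using assms by (intro sum_mono) (simp add: less_imp_le)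
  ultimately show "0 \<le> prob_one w xs x" "prob_one w xs x \<le> 1"
    by (simp_all add: prob_one_def)
qed

lemma prob_one_pos:
  assumes "\<And>j. 0 < w j" "i \<in> I" "E i xs x"
  shows "0 < prob_one w xs x"
proof -
  have "w i \<le> (\<Sum>j\<in>I. if E j xs x then w j else 0)"
    using member_le_sum[of i I "\<lambda>j. if E j xs x then w j else 0"] assms finite_I
    by (simp add: less_imp_le)
  then have "0 < (\<Sum>j\<in>I. if E j xs x then w j else 0)" using assms(1)[of i] by linarith
  moreover have "0 < (\<Sum>j\<in>I. w j)" using finite_I I_ne assms by (simp add: sum_pos)
  ultimately show ?thesis by (simp add: prob_one_def)
qed

lemma valid_learner: "valid_learner learner"
  unfolding valid_learner_def learner_def using prob_one_bounds weights_pos by blast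

lemma sum_weights_update:
  assumes "\<And>j. 0 < w j"
  shows "(\<Sum>j\<in>I. w j * exp (- \<eta> * (if E j xs x then c else 0)))
       = (\<Sum>j\<in>I. w j) * (1 - prob_one w xs x + prob_one w xs x * exp (- \<eta> * c))"
proof -
  define W where "W = (\<Sum>j\<in>I. w j)"
  define N where "N = (\<Sum>j\<in>I. if E j xs x then w j else 0)"
  have "0 < W" using finite_I I_ne assms by (simp add: sum_pos W_def)
  have "(\<Sum>j\<in>I. w j * exp (- \<eta> * (if E j xs x then c else 0)))
      = (\<Sum>j\<in>I. w j + (exp (- \<eta> * c) - 1) * (if E j xs x then w j else 0))"
    by (intro sum.cong) (auto simp: algebra_simps)
  also have "\<dots> = W + (exp (- \<eta> * c) - 1) * N"
    by (simp add: sum.distrib sum_distrib_left W_def N_def)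
  also have "\<dots> = W * (1 - N / W + N / W * exp (- \<eta> * c))"
    using \<open>0 < W\<close> by (simp add: field_simps)
  finally show ?thesis by (simp add: W_def N_def prob_one_def)
qed

lemma potential_snoc:
  fixes hist :: "'x history" and r :: "'x \<times> bool \<times> bool option"
  defines "q \<equiv> prob_one (weights hist) (map fst hist) (fst r)"
    and "c \<equiv> loss_estimate (weights hist) (map fst hist) r"
  shows "potential (hist @ [r]) i = potential hist i + ln (1 - q + q * exp (- \<eta> * c)) / \<eta>
    + (if E i (map fst hist) (fst r) then c else 0)"
proof -
  let ?w = "weights hist" and ?ci = "if E i (map fst hist) (fst r) then c else 0"
  have F: "0 < 1 - q + q * exp (- \<eta> * c)"
    unfolding q_def using prob_one_bounds[OF weights_pos] by (intro mixture_exp_pos)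
  have "(\<Sum>j\<in>I. weights (hist @ [r]) j) = (\<Sum>j\<in>I. ?w j) * (1 - q + q * exp (- \<eta> * c))"
    unfolding weights_snoc q_def c_def by (rule sum_weights_update[OF weights_pos])
  then have "ln (\<Sum>j\<in>I. weights (hist @ [r]) j) = ln (\<Sum>j\<in>I. ?w j) + ln (1 - q + q * exp (- \<eta> * c))"
    by (simp only: ln_mult_pos[OF sum_weights_pos F])
  moreover have "ln (weights (hist @ [r]) i) = ln (?w i) - \<eta> * ?ci"
    using weights_pos[of hist i] by (simp add: weights_snoc ln_mult_pos c_def)
  ultimately show ?thesis
    using eta_pos by (simp add: potential_def field_simps)
qed

lemma potential_Nil: "potential [] i = ln (card I) / \<eta>"
  by (simp add: potential_def weights_Nil)

lemma potential_nonneg: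
  assumes "i \<in> I"
  shows "0 \<le> potential hist i"
proof -
  have "weights hist i \<le> (\<Sum>j\<in>I. weights hist j)"
    using member_le_sum[of i I "weights hist"] assms finite_I weights_pos by (simp add: less_imp_le)
  then show ?thesis
    using weights_pos[of hist i] eta_pos by (simp add: potential_def)
qed

lemma expected_potential_step:
  assumes "i \<in> I"
  shows "learner hist x * ((if y then 0 else 1) + potential (hist @ [(x, True, Some y)]) i)
       + (1 - learner hist x) * ((if y then 1 else 0) + potential (hist @ [(x, False, None)]) i)
     \<le> potential hist i + (if E i (map fst hist) x = y then 0 else 1) + 2 * \<eta>"
proof -
  define q where "q = learner hist x"
  let ?e = "E i (map fst hist) x" and ?P = "potential hist i"
  define c where "c = (if y then 0 else 2 / q) - 1"
  have q: "0 \<le> q" "q \<le> 1" "?e \<Longrightarrow> 0 < q"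
    using prob_one_bounds[OF weights_pos] prob_one_pos[OF weights_pos assms(1)]
    by (simp_all add: q_def learner_def)
  have pot1: "potential (hist @ [(x, True, Some y)]) i
      = ?P + ln (1 - q + q * exp (- \<eta> * c)) / \<eta> + (if ?e then c else 0)"
    unfolding potential_snoc by (simp add: loss_estimate_def q_def c_def learner_def)
  have pot0: "potential (hist @ [(x, False, None)]) i
      = ?P + ln (1 - q + q * exp \<eta>) / \<eta> - (if ?e then 1 else 0)"
    unfolding potential_snoc by (simp add: loss_estimate_def q_def learner_def)
  have "q * ((if y then 0 else 1) + potential (hist @ [(x, True, Some y)]) i)
       + (1 - q) * ((if y then 1 else 0) + potential (hist @ [(x, False, None)]) i)
     = ?P + (q * ((if y then 0 else 1) + ln (1 - q + q * exp (- \<eta> * c)) / \<eta> + (if ?e then c else 0))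
       + (1 - q) * ((if y then 1 else 0) + ln (1 - q + q * exp \<eta>) / \<eta> - (if ?e then 1 else 0)))"
    unfolding pot1 pot0 by (simp add: algebra_simps)
  also have "\<dots> \<le> ?P + ((if ?e = y then 0 else 1) + 2 * \<eta>)"
    unfolding c_def by (rule add_left_mono, rule exp_weights_round_le[OF q(1,2) eta_pos eta_le_1 q(3)])
  finally show ?thesis by (simp add: q_def)
qed

theorem exp_mistakes_learner_le:
  assumes "i \<in> I"
  shows "exp_mistakes learner hist s
    \<le> expert_mistakes i (map fst hist) s + potential hist i + 2 * \<eta> * length s"
proof (induction s arbitrary: hist)
  case Nil
  then show ?case using potential_nonneg[OF assms] by simp
next
  case (Cons p s)
  obtain x y where p: "p = (x, y)" by (cases p)
  let ?q = "learner hist x" and ?h1 = "hist @ [(x, True, Some y)]" and ?h0 = "hist @ [(x, False, None)]"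
  let ?R = "real (expert_mistakes i (map fst hist @ [x]) s) + 2 * \<eta> * length s"
  have q: "0 \<le> ?q" "?q \<le> 1" using valid_learner by (simp_all add: valid_learner_def)
  have "exp_mistakes learner hist (p # s)
      = ?q * ((if y then 0 else 1) + exp_mistakes learner ?h1 s)
        + (1 - ?q) * ((if y then 1 else 0) + exp_mistakes learner ?h0 s)"
    by (simp add: p)
  also have "\<dots> \<le> ?q * ((if y then 0 else 1) + (potential ?h1 i + ?R))
        + (1 - ?q) * ((if y then 1 else 0) + (potential ?h0 i + ?R))"
    using Cons.IH[of ?h1] Cons.IH[of ?h0] q by (intro add_mono mult_left_mono) (simp_all add: algebra_simps)
  also have "\<dots> = ?q * ((if y then 0 else 1) + potential ?h1 i)
        + (1 - ?q) * ((if y then 1 else 0) + potential ?h0 i) + ?R"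
    by (simp add: algebra_simps)
  also have "\<dots> \<le> potential hist i + (if E i (map fst hist) x = y then 0 else 1) + 2 * \<eta> + ?R"
    using expected_potential_step[OF assms] by simp
  also have "\<dots> = expert_mistakes i (map fst hist) (p # s) + potential hist i + 2 * \<eta> * length (p # s)"
    by (simp add: p algebra_simps)
  finally show ?case .
qed

lemma expert_mistakes_eq_mistakes:
  assumes "\<forall>t<length s. E i (xs @ map fst (take t s)) (fst (s ! t)) = h (fst (s ! t))"
  shows "expert_mistakes i xs s = mistakes h s"
  using assms
proof (induction s arbitrary: xs)
  case (Cons p s)
  obtain x y where p: "p = (x, y)" by (cases p)
  have "E i xs x = h x" using Cons.prems[rule_format, of 0] by (simp add: p)
  moreover have "expert_mistakes i (xs @ [x]) s = mistakes h s"
    using Cons.prems[rule_format, of "Suc _"] by (intro Cons.IH) (simp add: p)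
  ultimately show ?case by (simp add: p)
qed simp

end

section \<open>Upper bound\<close>

lemma card_bounded_subsets_le: "card {M. M \<subseteq> {..<T} \<and> card M \<le> d} \<le> (T + 1) ^ d"
proof (induction d)
  case 0
  have "{M. M \<subseteq> {..<T} \<and> card M \<le> 0} = {{}}"
    by (auto dest: finite_subset[OF _ finite_lessThan])
  then show ?case by simp
next
  case (Suc d)
  let ?S = "\<lambda>d. {M. M \<subseteq> {..<T} \<and> card M \<le> d}"
  have fin: "finite (?S d)" by (rule finite_subset[of _ "Pow {..<T}"]) auto
  have "?S (Suc d) \<subseteq> ?S d \<union> (\<Union>t\<in>{..<T}. insert t ` ?S d)"
  proof
    fix M assume M: "M \<in> ?S (Suc d)"
    show "M \<in> ?S d \<union> (\<Union>t\<in>{..<T}. insert t ` ?S d)"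
    proof (cases "card M \<le> d")
      case False
      then obtain t where "t \<in> M" using M by fastforce
      moreover have "finite M" using M finite_subset by blast
      ultimately have "M - {t} \<in> ?S d" "M = insert t (M - {t})" "t \<in> {..<T}"
        using M False by auto
      then show ?thesis by blast
    qed (use M in auto)
  qed
  then have "card (?S (Suc d)) \<le> card (?S d \<union> (\<Union>t\<in>{..<T}. insert t ` ?S d))"
    using fin by (intro card_mono) auto
  also have "\<dots> \<le> card (?S d) + card (\<Union>t\<in>{..<T}. insert t ` ?S d)"
    by (rule card_Un_le)
  also have "card (\<Union>t\<in>{..<T}. insert t ` ?S d) \<le> (\<Sum>t\<in>{..<T}. card (insert t ` ?S d))"
    by (rule card_UN_le) simp
  also have "\<dots> \<le> (\<Sum>t\<in>{..<T}. card (?S d))"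
    by (intro sum_mono card_image_le fin)
  finally have "card (?S (Suc d)) \<le> (T + 1) * card (?S d)" by simp
  also have "\<dots> \<le> (T + 1) * (T + 1) ^ d" using Suc.IH by (rule mult_le_mono2)
  finally show ?case by simp
qed

lemma (in bounded_ldim) minimax_regret_le_exp_weights:
  assumes "H \<noteq> {}" "0 < \<eta>" "\<eta> \<le> 1"
  shows "minimax_regret T H \<le> ln (card {M. M \<subseteq> {..<T} \<and> card M \<le> d}) / \<eta> + 2 * \<eta> * T"
proof -
  define I where "I = {M. M \<subseteq> {..<T} \<and> card M \<le> d}"
  have "finite I" unfolding I_def by (rule finite_subset[of _ "Pow {..<T}"]) auto
  moreover have "I \<noteq> {}" unfolding I_def by auto
  ultimately interpret EW: apple_tasting_exp_weights I expert \<eta>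
    using assms by unfold_locales
  have "regret EW.learner T H \<le> ln (card I) / \<eta> + 2 * \<eta> * T"
  proof (rule regret_le)
    fix s :: "('x \<times> bool) list" assume len: "length s = T"
    obtain h where h: "h \<in> H" "(INF g\<in>H. mistakes g s) = mistakes h s"
      using assms(1) Inf_nat_def1[of "(\<lambda>g. mistakes g s) ` H"] by force
    let ?M = "soa_mistakes h (map fst s)"
    have "card ?M \<le> d" by (rule card_soa_mistakes_le[OF h(1)])
    moreover have "?M \<subseteq> {..<T}" using len by (auto simp: soa_mistakes_def)
    ultimately have "?M \<in> I" by (simp add: I_def)
    moreover have "EW.expert_mistakes ?M [] s = mistakes h s"
      using expert_soa_mistakes[of _ "map fst s" h] by (intro EW.expert_mistakes_eq_mistakes) (simp add: take_map)
    ultimately show "exp_mistakes EW.learner [] s - real (INF g\<in>H. mistakes g s) \<le> ln (card I) / \<eta> + 2 * \<eta> * T"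
      using EW.exp_mistakes_learner_le[of ?M "[]" s] h(2) len by (simp add: EW.potential_Nil)
  qed
  then show ?thesis
    using minimax_regret_le_regret[OF EW.valid_learner assms(1), of T] by (simp add: I_def)
qed

lemma ln_2_ge_half: "1 / 2 \<le> ln (2 :: real)"
  using ln_le_minus_one[of "1 / 2 :: real"] by (simp add: ln_div)

lemma le_9_mult_ln:
  fixes x :: real
  assumes "2 \<le> x" "x \<le> 9"
  shows "x \<le> 9 * ln x"
proof (cases "x \<le> 4")
  case True
  then show ?thesis using ln_2_ge_half ln_le_cancel_iff[of 2 x] assms(1) by linarith
next
  case False
  have "ln 4 = 2 * ln (2 :: real)" using ln_realpow[of 2 2] by simp
  then have "1 \<le> ln x" using ln_2_ge_half ln_le_cancel_iff[of 4 x] False by linarith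
  then show ?thesis using assms(2) by linarith
qed

lemma ln_add_one_le_ln:
  fixes x :: real
  assumes "9 \<le> x"
  shows "ln (x + 1) \<le> 9 / 8 * ln x"
proof -
  have "x + 1 = x * (1 + 1 / x)" using assms by (simp add: field_simps)
  then have "ln (x + 1) = ln x + ln (1 + 1 / x)"
    using assms by (simp add: ln_mult_pos add_pos_pos)
  also have "ln (1 + 1 / x) \<le> 1 / x"
    using assms by (intro ln_add_one_self_le_self) simp
  also have "1 / x \<le> 1 / 8 * ln x"
  proof -
    have "ln 9 \<le> ln x" using assms by simp
    then have "1 \<le> ln x" using le_9_mult_ln[of 9] by simp
    moreover have "1 / x \<le> 1 / 8" using assms by (simp add: divide_simps)
    ultimately show ?thesis by linarith
  qed
  finally show ?thesis by simp
qed

lemma le_of_eta_tradeoff: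
  fixes R L T :: real
  assumes "0 \<le> L" "L \<le> 2 * T" "0 < T"
    and bound: "\<And>\<eta>. 0 < \<eta> \<Longrightarrow> \<eta> \<le> 1 \<Longrightarrow> R \<le> L / \<eta> + 2 * \<eta> * T"
  shows "R \<le> 2 * sqrt (2 * L * T)"
proof (cases "L = 0")
  case True
  show ?thesis
  proof (rule ccontr)
    assume "\<not> ?thesis"
    then have "0 < R" using True by simp
    define \<eta> where "\<eta> = min 1 (R / (4 * T))"
    have "0 < \<eta>" "\<eta> \<le> 1" using \<open>0 < R\<close> assms(3) by (simp_all add: \<eta>_def)
    then have "R \<le> 2 * \<eta> * T" using bound True by simp
    also have "\<dots> \<le> 2 * (R / (4 * T)) * T"
      using assms(3) by (intro mult_right_mono mult_left_mono) (auto simp: \<eta>_def)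
    also have "\<dots> = R / 2" using assms(3) by simp
    finally show False using \<open>0 < R\<close> by simp
  qed
next
  case False
  define \<eta> where "\<eta> = sqrt (L / (2 * T))"
  have L: "0 < L" using False assms(1) by simp
  have "0 < \<eta>" "\<eta> \<le> 1" using L assms(2,3) by (simp_all add: \<eta>_def)
  then have "R \<le> L / \<eta> + 2 * \<eta> * T" by (rule bound)
  also have "L / \<eta> = sqrt (2 * L * T)"
    using L assms(3) by (simp add: \<eta>_def real_sqrt_divide real_sqrt_mult field_simps)
  also have "2 * \<eta> * T = sqrt (2 * L * T)"
    using L assms(3) by (simp add: \<eta>_def real_sqrt_divide real_sqrt_mult field_simps)
  finally show ?thesis by simp
qed

lemma ln_card_bounded_subsets_le:
  "ln (card {M. M \<subseteq> {..<T} \<and> card M \<le> d}) \<le> d * ln (real T + 1)"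
proof -
  let ?S = "{M. M \<subseteq> {..<T} \<and> card M \<le> d}"
  have "finite ?S" by (rule finite_subset[of _ "Pow {..<T}"]) auto
  moreover have "{} \<in> ?S" by simp
  ultimately have "0 < card ?S" by (auto simp: card_gt_0_iff)
  moreover have "real (card ?S) \<le> (real T + 1) ^ d"
    using card_bounded_subsets_le[of T d] by (metis of_nat_Suc of_nat_le_iff of_nat_power Suc_eq_plus1 add.commute)
  ultimately have "ln (card ?S) \<le> ln ((real T + 1) ^ d)" by simp
  then show ?thesis by (simp add: ln_realpow)
qed

lemma ln_Suc_horizon_le:
  fixes d T :: nat
  assumes "2 \<le> T" "9 * real d * ln (real T) < real T"
  shows "real d * ln (real T + 1) \<le> 9 / 8 * (real d * ln (real T))"
proof (cases "d = 0")
  case False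
  have "9 \<le> real T"
  proof (rule ccontr)
    assume "\<not> 9 \<le> real T"
    then have "real T \<le> 9 * ln (real T)" using le_9_mult_ln assms(1) by simp
    also have "\<dots> \<le> 9 * real d * ln (real T)" using False assms(1) by simp
    finally show False using assms(2) by simp
  qed
  then have "real d * ln (real T + 1) \<le> real d * (9 / 8 * ln (real T))"
    using ln_add_one_le_ln[of "real T"] by (intro mult_left_mono) auto
  then show ?thesis by simp
qed simp

theorem (in bounded_ldim) minimax_regret_le_sqrt:
  assumes "H \<noteq> {}" "2 \<le> T"
  shows "minimax_regret T H \<le> 3 * sqrt (real d * real T * ln (real T))"
proof (cases "real T \<le> 9 * real d * ln (real T)")
  case True
  then have "real T * real T \<le> 9 * real d * ln (real T) * real T"
    by (rule mult_right_mono) simp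
  then have "(real T)\<^sup>2 \<le> 9 * (real d * real T * ln (real T))"
    by (simp add: power2_eq_square ac_simps)
  then have "real T \<le> sqrt (9 * (real d * real T * ln (real T)))"
    by (rule real_le_rsqrt)
  also have "\<dots> = 3 * sqrt (real d * real T * ln (real T))"
    by (simp add: real_sqrt_mult)
  finally show ?thesis using minimax_regret_le_horizon[OF assms(1), of T] by simp
next
  case False
  define L where "L = real d * ln (real T + 1)"
  have "L \<le> 9 / 8 * (real d * ln (real T))"
    unfolding L_def using ln_Suc_horizon_le[OF assms(2)] False by simp
  moreover have "0 \<le> L" by (simp add: L_def)
  moreover have "0 \<le> real d * ln (real T)" using assms(2) by simp
  ultimately have "L \<le> 2 * real T" using False by linarith
  have "minimax_regret T H \<le> 2 * sqrt (2 * L * T)"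
  proof (rule le_of_eta_tradeoff[OF \<open>0 \<le> L\<close> \<open>L \<le> 2 * real T\<close>])
    fix \<eta> :: real assume "0 < \<eta>" "\<eta> \<le> 1"
    moreover have "ln (card {M. M \<subseteq> {..<T} \<and> card M \<le> d}) / \<eta> \<le> L / \<eta>"
      using ln_card_bounded_subsets_le[of T d] \<open>0 < \<eta>\<close> by (simp add: L_def divide_right_mono)
    ultimately show "minimax_regret T H \<le> L / \<eta> + 2 * \<eta> * T"
      using minimax_regret_le_exp_weights[OF assms(1) \<open>0 < \<eta>\<close> \<open>\<eta> \<le> 1\<close>, of T] by linarith
  qed (use assms(2) in simp)
  also have "\<dots> \<le> 2 * sqrt (9 / 4 * (real d * real T * ln (real T)))"
  proof -
    have "2 * L * T \<le> 2 * (9 / 8 * (real d * ln (real T))) * T"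
      using \<open>L \<le> 9 / 8 * (real d * ln (real T))\<close> by (intro mult_right_mono) auto
    then show ?thesis by (simp add: ac_simps)
  qed
  also have "\<dots> = 3 * sqrt (real d * real T * ln (real T))"
    by (simp add: real_sqrt_mult real_sqrt_divide)
  finally show ?thesis .
qed

section \<open>Simple random walk\<close>

text \<open>\<open>cube_sum n F\<close> sums \<open>F\<close> over all Boolean lists of length \<open>n\<close>, i.e. it is \<open>2 ^ n\<close> times the
  expectation of \<open>F\<close> under uniformly random labels.\<close>

fun cube_sum :: "nat \<Rightarrow> (bool list \<Rightarrow> real) \<Rightarrow> real" where
  "cube_sum 0 F = F []"
| "cube_sum (Suc n) F = cube_sum n (\<lambda>ys. F (True # ys)) + cube_sum n (\<lambda>ys. F (False # ys))"

lemma cube_sum_cong: "(\<And>ys. length ys = n \<Longrightarrow> F ys = G ys) \<Longrightarrow> cube_sum n F = cube_sum n G"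
proof (induction n arbitrary: F G)
  case (Suc n)
  have "cube_sum n (\<lambda>ys. F (b # ys)) = cube_sum n (\<lambda>ys. G (b # ys))" for b
    by (rule Suc.IH) (simp add: Suc.prems)
  then show ?case by simp
qed simp

lemma cube_sum_add: "cube_sum n (\<lambda>ys. F ys + G ys) = cube_sum n F + cube_sum n G"
  by (induction n arbitrary: F G) simp_all

lemma cube_sum_diff: "cube_sum n (\<lambda>ys. F ys - G ys) = cube_sum n F - cube_sum n G"
  by (induction n arbitrary: F G) simp_all

lemma cube_sum_cmult: "cube_sum n (\<lambda>ys. c * F ys) = c * cube_sum n F"
  by (induction n arbitrary: F) (simp_all add: algebra_simps)

lemma cube_sum_const: "cube_sum n (\<lambda>_. c) = 2 ^ n * c"
  by (induction n) simp_all

lemma cube_sum_mono: "(\<And>ys. length ys = n \<Longrightarrow> F ys \<le> G ys) \<Longrightarrow> cube_sum n F \<le> cube_sum n G"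
proof (induction n arbitrary: F G)
  case (Suc n)
  have "cube_sum n (\<lambda>ys. F (b # ys)) \<le> cube_sum n (\<lambda>ys. G (b # ys))" for b
    by (rule Suc.IH) (simp add: Suc.prems)
  then show ?case by (simp add: add_mono)
qed simp

lemma cube_sum_strict_mono: "(\<And>ys. length ys = n \<Longrightarrow> F ys < G ys) \<Longrightarrow> cube_sum n F < cube_sum n G"
proof (induction n arbitrary: F G)
  case (Suc n)
  have "cube_sum n (\<lambda>ys. F (b # ys)) < cube_sum n (\<lambda>ys. G (b # ys))" for b
    by (rule Suc.IH) (simp add: Suc.prems)
  then show ?case by (simp add: add_strict_mono)
qed simp

lemma cube_sum_append: "cube_sum (k + m) F = cube_sum k (\<lambda>zs. cube_sum m (\<lambda>ws. F (zs @ ws)))"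
  by (induction k arbitrary: F) simp_all

lemma ex_ge_cube_sum_average:
  assumes "2 ^ n * c \<le> cube_sum n F"
  shows "\<exists>ys. length ys = n \<and> c \<le> F ys"
proof (rule ccontr)
  assume "\<not> ?thesis"
  then have "cube_sum n F < cube_sum n (\<lambda>_. c)"
    by (intro cube_sum_strict_mono) force
  then show False using assms by (simp add: cube_sum_const)
qed

lemma cube_sum_count_eq: "cube_sum k (\<lambda>zs. if count_list zs True = a then 1 else 0) = real (k choose a)"
proof (induction k arbitrary: a)
  case (Suc k)
  show ?case
  proof (cases a)
    case 0
    then show ?thesis using Suc.IH[of 0] by (simp add: cube_sum_const)
  next
    case (Suc b)
    then show ?thesis using Suc.IH[of b] Suc.IH[of a] by simp
  qed
qed simp

definition walk :: "bool list \<Rightarrow> int" where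
  "walk zs = 2 * int (count_list zs True) - int (length zs)"

lemma walk_Nil [simp]: "walk [] = 0"
  and walk_Cons [simp]: "walk (b # zs) = walk zs + (if b then 1 else -1)"
  by (simp_all add: walk_def)

lemma cube_sum_walk_Suc:
  "cube_sum (Suc k) (\<lambda>zs. f (c + walk zs))
     = cube_sum k (\<lambda>zs. f ((c + 1) + walk zs)) + cube_sum k (\<lambda>zs. f ((c - 1) + walk zs))"
  by (simp add: algebra_simps)

text \<open>Since \<open>\<bar>w + 1\<bar> + \<bar>w - 1\<bar> = 2 \<bar>w\<bar> + 2 [w = 0]\<close> for integers \<open>w\<close>.\<close>

lemma cube_sum_abs_walk_Suc:
  "cube_sum (Suc k) (\<lambda>zs. real_of_int \<bar>c + walk zs\<bar>)
     = 2 * cube_sum k (\<lambda>zs. real_of_int \<bar>c + walk zs\<bar>) + 2 * cube_sum k (\<lambda>zs. if c + walk zs = 0 then 1 else 0)"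
proof (induction k arbitrary: c)
  case 0
  consider "c = 0" | "1 \<le> c" | "c \<le> -1" by linarith
  then show ?case by cases simp_all
next
  case (Suc k)
  let ?A = "\<lambda>k c. cube_sum k (\<lambda>zs. real_of_int \<bar>c + walk zs\<bar>)"
  let ?Z = "\<lambda>k c. cube_sum k (\<lambda>zs. if c + walk zs = 0 then 1 else 0)"
  have "?A (Suc (Suc k)) c = ?A (Suc k) (c + 1) + ?A (Suc k) (c - 1)"
    by (rule cube_sum_walk_Suc)
  also have "\<dots> = 2 * (?A k (c + 1) + ?A k (c - 1)) + 2 * (?Z k (c + 1) + ?Z k (c - 1))"
    unfolding Suc.IH by (simp only: algebra_simps)
  also have "\<dots> = 2 * ?A (Suc k) c + 2 * ?Z (Suc k) c"
    by (simp only: cube_sum_walk_Suc[of k "\<lambda>w. real_of_int \<bar>w\<bar>" c]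
        cube_sum_walk_Suc[of k "\<lambda>w. if w = 0 then 1 else 0" c])
  finally show ?case .
qed

lemma cube_sum_walk_eq_0_even: "cube_sum (2 * m) (\<lambda>zs. if walk zs = 0 then 1 else 0) = real ((2 * m) choose m)"
proof -
  have "cube_sum (2 * m) (\<lambda>zs. if walk zs = 0 then 1 else 0)
      = cube_sum (2 * m) (\<lambda>zs. if count_list zs True = m then 1 else 0)"
    by (rule cube_sum_cong) (auto simp: walk_def)
  then show ?thesis by (simp add: cube_sum_count_eq)
qed

lemma cube_sum_walk_eq_0_odd: "cube_sum (Suc (2 * m)) (\<lambda>zs. if walk zs = 0 then 1 else 0) = 0"
proof -
  have "walk zs \<noteq> 0" if "length zs = Suc (2 * m)" for zs
    using that by (auto simp: walk_def) presburger
  then have "cube_sum (Suc (2 * m)) (\<lambda>zs. if walk zs = 0 then 1 else 0) = cube_sum (Suc (2 * m)) (\<lambda>_. 0)"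
    by (intro cube_sum_cong) simp
  then show ?thesis by (simp add: cube_sum_const)
qed

definition mean_abs_walk :: "nat \<Rightarrow> real" where
  "mean_abs_walk k = cube_sum k (\<lambda>zs. \<bar>real_of_int (walk zs)\<bar>) / 2 ^ k"

definition return_prob :: "nat \<Rightarrow> real" where
  "return_prob m = real ((2 * m) choose m) / 4 ^ m"

lemma mean_abs_walk_nonneg: "0 \<le> mean_abs_walk k"
  using cube_sum_mono[of k "\<lambda>_. 0" "\<lambda>zs. \<bar>real_of_int (walk zs)\<bar>"] by (simp add: mean_abs_walk_def cube_sum_const)

lemma mean_abs_walk_Suc:
  "mean_abs_walk (Suc k) = mean_abs_walk k + cube_sum k (\<lambda>zs. if walk zs = 0 then 1 else 0) / 2 ^ k"
  using cube_sum_abs_walk_Suc[of k 0] by (simp add: mean_abs_walk_def field_simps)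

lemma mean_abs_walk_odd: "mean_abs_walk (Suc (Suc (2 * m))) = mean_abs_walk (Suc (2 * m))"
  using mean_abs_walk_Suc[of "Suc (2 * m)"] cube_sum_walk_eq_0_odd[of m] by simp

lemma Suc_times_central_binomial_Suc:
  "Suc m * (2 * Suc m choose Suc m) = 2 * Suc (2 * m) * ((2 * m) choose m)"
proof -
  define n where "n = 2 * m"
  have a: "Suc m * (Suc (Suc n) choose Suc m) = Suc (Suc n) * (Suc n choose m)"
    by (rule Suc_times_binomial)
  have b: "Suc n choose m = Suc n choose Suc m"
    using binomial_symmetric[of m "Suc n"] by (simp add: n_def)
  have c: "Suc m * (Suc n choose Suc m) = Suc n * (n choose m)"
    by (rule Suc_times_binomial)
  have "Suc m * (Suc m * (Suc (Suc n) choose Suc m)) = Suc (Suc n) * (Suc m * (Suc n choose Suc m))"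
    by (simp only: a b mult.left_commute)
  also have "\<dots> = Suc m * (2 * Suc n * (n choose m))"
    by (simp only: c) (simp add: n_def)
  finally have "Suc m * (Suc (Suc n) choose Suc m) = 2 * Suc n * (n choose m)"
    using mult_left_cancel[of "Suc m"] by blast
  moreover have "2 * Suc m = Suc (Suc n)" by (simp add: n_def)
  ultimately show ?thesis unfolding n_def[symmetric] by (simp only:)
qed

lemma return_prob_Suc: "(2 * real m + 2) * return_prob (Suc m) = (2 * real m + 1) * return_prob m"
proof -
  define C' where "C' = real (2 * Suc m choose Suc m)"
  define C where "C = real ((2 * m) choose m)"
  have "real (Suc m) * C' = 2 * real (Suc (2 * m)) * C"
    unfolding C'_def C_def using arg_cong[OF Suc_times_central_binomial_Suc, of real]
    by (simp only: of_nat_mult of_nat_numeral)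
  have "(2 * real m + 2) * return_prob (Suc m) = 2 * (real (Suc m) * C') / (4 * 4 ^ m)"
    unfolding return_prob_def C'_def[symmetric] by (simp add: algebra_simps)
  also have "\<dots> = (2 * real m + 1) * (C / 4 ^ m)"
    unfolding \<open>real (Suc m) * C' = 2 * real (Suc (2 * m)) * C\<close> by (simp add: field_simps)
  also have "\<dots> = (2 * real m + 1) * return_prob m"
    by (simp add: return_prob_def C_def)
  finally show ?thesis .
qed

lemma mean_abs_walk_even: "mean_abs_walk (2 * m) = 2 * m * return_prob m"
proof (induction m)
  case 0
  then show ?case by (simp add: mean_abs_walk_def)
next
  case (Suc m)
  have "mean_abs_walk (2 * Suc m) = mean_abs_walk (Suc (2 * m))"
    using mean_abs_walk_odd[of m] by simp
  also have "\<dots> = (2 * m + 1) * return_prob m"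
  proof -
    have "(2 :: real) ^ (2 * m) = 4 ^ m" by (simp add: power_mult)
    then show ?thesis
      using mean_abs_walk_Suc[of "2 * m"] cube_sum_walk_eq_0_even[of m] Suc.IH
      by (simp add: return_prob_def algebra_simps add_divide_distrib)
  qed
  also have "\<dots> = 2 * real (Suc m) * return_prob (Suc m)"
    using return_prob_Suc[of m] by (simp add: algebra_simps)
  finally show ?case .
qed

text \<open>The classical lower bound \<open>binomial (2 * m) m \<ge> 4 ^ m / (2 * sqrt m)\<close>.\<close>

lemma return_prob_lower: "1 \<le> m \<Longrightarrow> 1 \<le> 4 * m * (return_prob m)\<^sup>2"
proof (induction m rule: nat_induct_at_least)
  case base
  then show ?case by (simp add: return_prob_def power2_eq_square)
next
  case (Suc m)
  let ?p = "return_prob m" and ?p' = "return_prob (Suc m)"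
  have "(real m + 1) * (4 * real (Suc m) * ?p'\<^sup>2) = ((2 * real m + 2) * ?p')\<^sup>2"
    by (simp add: power2_eq_square algebra_simps)
  also have "\<dots> = (2 * real m + 1)\<^sup>2 * ?p\<^sup>2"
    by (simp only: return_prob_Suc power_mult_distrib)
  also have "\<dots> \<ge> (4 * real m * (real m + 1)) * ?p\<^sup>2"
    by (intro mult_right_mono) (simp_all add: power2_eq_square algebra_simps)
  also have "(4 * real m * (real m + 1)) * ?p\<^sup>2 = (real m + 1) * (4 * real m * ?p\<^sup>2)"
    by (simp add: algebra_simps)
  finally have "(real m + 1) * (4 * real m * ?p\<^sup>2) \<le> (real m + 1) * (4 * real (Suc m) * ?p'\<^sup>2)" .
  moreover have "(real m + 1) * 1 \<le> (real m + 1) * (4 * real m * ?p\<^sup>2)"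
    using Suc.IH by (intro mult_left_mono) simp_all
  ultimately have "(real m + 1) * 1 \<le> (real m + 1) * (4 * real (Suc m) * ?p'\<^sup>2)"
    by linarith
  then show ?case
    by (metis mult_le_cancel_left_pos of_nat_Suc of_nat_0_less_iff zero_less_Suc add.commute)
qed

lemma mean_abs_walk_ge: "sqrt (real ((k + 1) div 2)) \<le> mean_abs_walk k"
proof -
  have even: "sqrt m \<le> mean_abs_walk (2 * m)" for m
  proof (cases "m = 0")
    case False
    have "real m \<le> real m * (4 * m * (return_prob m)\<^sup>2)"
      using return_prob_lower[of m] False by simp
    also have "\<dots> = (mean_abs_walk (2 * m))\<^sup>2"
      by (simp add: mean_abs_walk_even power2_eq_square)
    finally show ?thesis
      using mean_abs_walk_nonneg real_le_lsqrt by blast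
  qed (simp add: mean_abs_walk_nonneg)
  have "k = 2 * (k div 2) \<or> k = Suc (2 * (k div 2))" by presburger
  then show ?thesis
  proof
    assume k: "k = Suc (2 * (k div 2))"
    then have "(k + 1) div 2 = Suc (k div 2)" by presburger
    then show ?thesis
      using even[of "Suc (k div 2)"] mean_abs_walk_odd[of "k div 2"] k by simp
  next
    assume k: "k = 2 * (k div 2)"
    then have "(k + 1) div 2 = k div 2" by presburger
    then show ?thesis using even[of "k div 2"] k by simp
  qed
qed

section \<open>Lower bound\<close>

text \<open>An adversary that reveals random labels: \<open>S ys\<close> is the sample played against the label
  sequence \<open>ys\<close>; the instance of each round is determined by the labels of the earlier rounds, and
  the label of round \<open>t\<close> is \<open>ys ! t\<close>.\<close>

fun adaptive_adversary :: "nat \<Rightarrow> (bool list \<Rightarrow> ('x \<times> bool) list) \<Rightarrow> bool" where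
  "adaptive_adversary 0 S \<longleftrightarrow> S [] = []"
| "adaptive_adversary (Suc n) S \<longleftrightarrow>
     (\<exists>x. \<forall>y ys. length ys = n \<longrightarrow> S (y # ys) = (x, y) # tl (S (y # ys)))
     \<and> (\<forall>y. adaptive_adversary n (\<lambda>ys. tl (S (y # ys))))"

lemma adaptive_adversary_length:
  "adaptive_adversary n S \<Longrightarrow> length ys = n \<Longrightarrow> length (S ys) = n"
proof (induction n arbitrary: S ys)
  case (Suc n)
  obtain y ys' where ys: "ys = y # ys'" "length ys' = n"
    using Suc.prems(2) by (cases ys) auto
  obtain x where "S (y # ys') = (x, y) # tl (S (y # ys'))"
    using Suc.prems(1) ys(2) by auto
  moreover have "length (tl (S (y # ys'))) = n"
    using Suc.prems(1) ys(2) by (intro Suc.IH) auto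
  ultimately show ?case using ys(1) by (metis length_Cons)
qed simp

text \<open>Against random labels every learner errs with probability \<open>1/2\<close> in every round.\<close>

lemma cube_sum_exp_mistakes:
  assumes "adaptive_adversary n S"
  shows "cube_sum n (\<lambda>ys. exp_mistakes A hist (S ys)) = 2 ^ n * n / 2"
  using assms
proof (induction n arbitrary: S hist)
  case (Suc n)
  obtain x where x: "\<And>y ys. length ys = n \<Longrightarrow> S (y # ys) = (x, y) # tl (S (y # ys))"
    and adv: "\<And>y. adaptive_adversary n (\<lambda>ys. tl (S (y # ys)))"
    using Suc.prems by auto
  let ?a = "A hist x" and ?c = "2 ^ n * real n / 2"
  have branch: "cube_sum n (\<lambda>ys. exp_mistakes A hist (S (y # ys)))
      = ?a * (2 ^ n * (if y then 0 else 1) + ?c) + (1 - ?a) * (2 ^ n * (if y then 1 else 0) + ?c)" for y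
  proof -
    let ?S' = "\<lambda>ys. tl (S (y # ys))"
    have "cube_sum n (\<lambda>ys. exp_mistakes A hist (S (y # ys)))
        = cube_sum n (\<lambda>ys. ?a * ((if y then 0 else 1) + exp_mistakes A (hist @ [(x, True, Some y)]) (?S' ys))
            + (1 - ?a) * ((if y then 1 else 0) + exp_mistakes A (hist @ [(x, False, None)]) (?S' ys)))"
      by (rule cube_sum_cong) (subst x, simp_all)
    also have "\<dots> = ?a * (2 ^ n * (if y then 0 else 1) + ?c) + (1 - ?a) * (2 ^ n * (if y then 1 else 0) + ?c)"
      by (simp only: cube_sum_add cube_sum_cmult cube_sum_const Suc.IH[OF adv])
    finally show ?thesis .
  qed
  have "cube_sum (Suc n) (\<lambda>ys. exp_mistakes A hist (S ys))
      = cube_sum n (\<lambda>ys. exp_mistakes A hist (S (True # ys)))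
        + cube_sum n (\<lambda>ys. exp_mistakes A hist (S (False # ys)))"
    by simp
  also have "\<dots> = 2 ^ n + 2 * ?c"
    unfolding branch by (simp add: algebra_simps)
  finally show ?case by (simp add: field_simps)
qed simp

definition majority :: "bool list \<Rightarrow> bool" where
  "majority zs \<longleftrightarrow> length zs \<le> 2 * count_list zs True"

definition minority_count :: "bool list \<Rightarrow> nat" where
  "minority_count zs = count_list zs (\<not> majority zs)"

lemma count_list_True_add_False: "count_list zs True + count_list zs False = length zs"
  by (induction zs) auto

lemma minority_count_eq: "real (minority_count zs) = length zs / 2 - \<bar>real_of_int (walk zs)\<bar> / 2"
proof -
  have "real (count_list zs True) + real (count_list zs False) = real (length zs)"
    using count_list_True_add_False[of zs] by (metis of_nat_add)
  then show ?thesis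
    by (cases "majority zs") (simp_all add: minority_count_def majority_def walk_def field_simps)
qed

lemma mistakes_constant_instance: "mistakes h (map (\<lambda>y. (x, y)) zs) = count_list zs (\<not> h x)"
  by (induction zs) auto

text \<open>The hypothesis realising the path of majorities errs exactly on the minority labels of each block.\<close>

fun block_adversary :: "(bool list \<Rightarrow> 'x) \<Rightarrow> nat list \<Rightarrow> bool list \<Rightarrow> ('x \<times> bool) list" where
  "block_adversary tree [] ys = []"
| "block_adversary tree (k # ks) ys = map (\<lambda>y. (tree [], y)) (take k ys)
     @ block_adversary (\<lambda>\<sigma>. tree (majority (take k ys) # \<sigma>)) ks (drop k ys)"

fun block_majorities :: "nat list \<Rightarrow> bool list \<Rightarrow> bool list" where
  "block_majorities [] ys = []"
| "block_majorities (k # ks) ys = majority (take k ys) # block_majorities ks (drop k ys)"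

fun block_minority_count :: "nat list \<Rightarrow> bool list \<Rightarrow> nat" where
  "block_minority_count [] ys = 0"
| "block_minority_count (k # ks) ys = minority_count (take k ys) + block_minority_count ks (drop k ys)"

lemma length_block_majorities [simp]: "length (block_majorities ks ys) = length ks"
  by (induction ks arbitrary: ys) simp_all

lemma adaptive_adversary_block:
  assumes "\<And>zs. length zs = k \<Longrightarrow> adaptive_adversary m (G zs)"
  shows "adaptive_adversary (k + m) (\<lambda>ys. map (\<lambda>y. (x, y)) (take k ys) @ G (take k ys) (drop k ys))"
  using assms
proof (induction k arbitrary: G)
  case (Suc k)
  have "adaptive_adversary (k + m) (\<lambda>ys. map (\<lambda>y. (x, y)) (take k ys) @ G (y # take k ys) (drop k ys))"
    for y by (rule Suc.IH) (simp add: Suc.prems)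
  then show ?case by simp
qed simp

lemma adaptive_block_adversary: "adaptive_adversary (sum_list ks) (block_adversary tree ks)"
proof (induction ks arbitrary: tree)
  case (Cons k ks)
  have "adaptive_adversary (k + sum_list ks) (\<lambda>ys. map (\<lambda>y. (tree [], y)) (take k ys)
      @ block_adversary (\<lambda>\<sigma>. tree (majority (take k ys) # \<sigma>)) ks (drop k ys))"
    by (rule adaptive_adversary_block) (rule Cons.IH)
  then show ?case by simp
qed simp

lemma mistakes_block_adversary:
  assumes "\<forall>i<length ks. h (tree (take i (block_majorities ks ys))) = block_majorities ks ys ! i"
  shows "mistakes h (block_adversary tree ks ys) = block_minority_count ks ys"
  using assms
proof (induction ks arbitrary: tree ys)
  case (Cons k ks)
  have root: "h (tree []) = majority (take k ys)"
    using Cons.prems[rule_format, of 0] by simp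
  have "mistakes h (map (\<lambda>y. (tree [], y)) (take k ys)) = minority_count (take k ys)"
    using root by (simp add: mistakes_constant_instance minority_count_def)
  moreover have "mistakes h (block_adversary (\<lambda>\<sigma>. tree (majority (take k ys) # \<sigma>)) ks (drop k ys))
      = block_minority_count ks (drop k ys)"
    using Cons.prems[rule_format, of "Suc _"] by (intro Cons.IH) simp
  ultimately show ?case by (simp add: mistakes_append)
qed simp

lemma cube_sum_minority_count:
  "cube_sum k (\<lambda>zs. real (minority_count zs)) = 2 ^ k * (real k / 2 - mean_abs_walk k / 2)"
proof -
  have "cube_sum k (\<lambda>zs. real (minority_count zs))
      = cube_sum k (\<lambda>zs. real k / 2 - (1 / 2) * \<bar>real_of_int (walk zs)\<bar>)"
    by (rule cube_sum_cong) (simp add: minority_count_eq)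
  also have "\<dots> = 2 ^ k * (real k / 2) - (1 / 2) * cube_sum k (\<lambda>zs. \<bar>real_of_int (walk zs)\<bar>)"
    by (simp only: cube_sum_diff cube_sum_cmult cube_sum_const)
  also have "\<dots> = 2 ^ k * (real k / 2 - mean_abs_walk k / 2)"
    by (simp add: mean_abs_walk_def algebra_simps)
  finally show ?thesis .
qed

lemma cube_sum_block_minority_count:
  "cube_sum (sum_list ks) (\<lambda>ys. real (block_minority_count ks ys))
     = 2 ^ sum_list ks * (real (sum_list ks) / 2 - (\<Sum>k\<leftarrow>ks. mean_abs_walk k) / 2)"
proof (induction ks)
  case (Cons k ks)
  let ?n = "sum_list ks" and ?B = "real (sum_list ks) / 2 - (\<Sum>k\<leftarrow>ks. mean_abs_walk k) / 2"
  have "cube_sum (k + ?n) (\<lambda>ys. real (block_minority_count (k # ks) ys))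
      = cube_sum k (\<lambda>zs. 2 ^ ?n * real (minority_count zs) + 2 ^ ?n * ?B)"
    unfolding cube_sum_append
  proof (rule cube_sum_cong)
    fix zs :: "bool list" assume "length zs = k"
    then have "cube_sum ?n (\<lambda>ws. real (block_minority_count (k # ks) (zs @ ws)))
        = cube_sum ?n (\<lambda>ws. real (minority_count zs) + real (block_minority_count ks ws))"
      by (intro cube_sum_cong) simp
    then show "cube_sum ?n (\<lambda>ws. real (block_minority_count (k # ks) (zs @ ws)))
        = 2 ^ ?n * real (minority_count zs) + 2 ^ ?n * ?B"
      using Cons.IH by (simp add: cube_sum_add cube_sum_const)
  qed
  also have "\<dots> = 2 ^ (k + ?n) * (real (k + ?n) / 2 - (\<Sum>k\<leftarrow>k # ks. mean_abs_walk k) / 2)"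
    by (simp only: cube_sum_add cube_sum_cmult cube_sum_const cube_sum_minority_count)
      (simp add: power_add algebra_simps)
  finally show ?case by simp
qed simp

lemma regret_ge_block_sum:
  fixes H :: "('x \<Rightarrow> bool) set"
  assumes "valid_learner A" "shatters_depth H (length ks)"
  shows "(\<Sum>k\<leftarrow>ks. mean_abs_walk k) / 2 \<le> regret A (sum_list ks) H"
proof -
  obtain tree :: "bool list \<Rightarrow> 'x"
    where tree: "\<And>\<sigma>. length \<sigma> = length ks \<Longrightarrow> \<exists>h\<in>H. \<forall>i<length ks. h (tree (take i \<sigma>)) = \<sigma> ! i"
    using assms(2) unfolding shatters_depth_def by blast
  let ?n = "sum_list ks" and ?S = "block_adversary tree ks" and ?W = "\<Sum>k\<leftarrow>ks. mean_abs_walk k"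
  have best: "real (INF h\<in>H. mistakes h (?S ys)) \<le> real (block_minority_count ks ys)" for ys
  proof -
    obtain h where h: "h \<in> H"
      "\<forall>i<length ks. h (tree (take i (block_majorities ks ys))) = block_majorities ks ys ! i"
      using tree[of "block_majorities ks ys"] by auto
    have "(INF h\<in>H. mistakes h (?S ys)) \<le> mistakes h (?S ys)"
      by (rule cINF_lower) (use h(1) in auto)
    also have "\<dots> = block_minority_count ks ys"
      by (rule mistakes_block_adversary[where tree = tree and h = h, OF h(2)])
    finally show ?thesis by simp
  qed
  have "2 ^ ?n * (?W / 2) = 2 ^ ?n * real ?n / 2 - cube_sum ?n (\<lambda>ys. real (block_minority_count ks ys))"
    by (simp add: cube_sum_block_minority_count algebra_simps)
  also have "\<dots> \<le> cube_sum ?n (\<lambda>ys. exp_mistakes A [] (?S ys) - real (INF h\<in>H. mistakes h (?S ys)))"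
    unfolding cube_sum_diff cube_sum_exp_mistakes[OF adaptive_block_adversary]
    using best by (intro diff_left_mono cube_sum_mono)
  finally obtain ys where "length ys = ?n"
    and "?W / 2 \<le> exp_mistakes A [] (?S ys) - real (INF h\<in>H. mistakes h (?S ys))"
    using ex_ge_cube_sum_average by blast
  moreover have "length (?S ys) = ?n"
    by (rule adaptive_adversary_length[OF adaptive_block_adversary \<open>length ys = ?n\<close>])
  ultimately show ?thesis
    using sample_regret_le_regret[OF assms(1), where H = H] by fastforce
qed

lemma sqrt_le_balanced_sum_odd:
  fixes d m r :: nat
  assumes "r \<le> d"
  shows "sqrt (d * (d * Suc (2 * m) + r) / 2) \<le> r * sqrt (Suc m) + (d - r) * sqrt (Suc m)"
proof -
  have "real d * real r \<le> real d * real d" using assms by (intro mult_left_mono) auto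
  then have "d * (d * Suc (2 * m) + r) / 2 \<le> d * d * (real m + 1)"
    by (simp add: algebra_simps)
  also have "\<dots> = (d * sqrt (Suc m))\<^sup>2"
    by (simp add: power_mult_distrib power2_eq_square)
  finally have "sqrt (d * (d * Suc (2 * m) + r) / 2) \<le> d * sqrt (Suc m)"
    by (simp add: real_le_lsqrt)
  also have "\<dots> = r * sqrt (Suc m) + (d - r) * sqrt (Suc m)"
    using assms by (simp add: of_nat_diff algebra_simps)
  finally show ?thesis .
qed

lemma sqrt_le_balanced_sum_even:
  fixes d m r :: nat
  assumes "1 \<le> m" "r \<le> d"
  shows "sqrt (d * (d * (2 * m) + r) / 2) \<le> r * sqrt (Suc m) + (d - r) * sqrt m"
proof -
  define D where "D = real d"
  define R where "R = real r"
  define s0 where "s0 = sqrt m"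
  define s1 where "s1 = sqrt (Suc m)"
  have DR: "0 \<le> R" "R \<le> D" "real (d - r) = D - R" using assms(2) by (simp_all add: D_def R_def of_nat_diff)
  have "real m + 1 / 4 \<le> s0 * s1"
  proof -
    have "(real m + 1 / 4)\<^sup>2 \<le> real m * real (Suc m)" using assms(1) by (simp add: power2_eq_square algebra_simps)
    then show ?thesis by (simp add: s0_def s1_def real_sqrt_mult[symmetric] real_le_rsqrt)
  qed
  have "d * (d * (2 * m) + r) / 2 = m * D\<^sup>2 + R * D / 2"
    by (simp add: D_def R_def power2_eq_square algebra_simps)
  also have "\<dots> \<le> R\<^sup>2 * (m + 1) + 2 * R * (D - R) * (m + 1 / 4) + (D - R)\<^sup>2 * m"
    by (simp add: power2_eq_square algebra_simps)
  also have "\<dots> \<le> R\<^sup>2 * (m + 1) + 2 * R * (D - R) * (s0 * s1) + (D - R)\<^sup>2 * m"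
    using \<open>real m + 1 / 4 \<le> s0 * s1\<close> DR by (simp add: mult_left_mono)
  also have "\<dots> = (R * s1 + (D - R) * s0)\<^sup>2"
    by (simp add: s0_def s1_def power2_eq_square algebra_simps)
  finally have "sqrt (d * (d * (2 * m) + r) / 2) \<le> R * s1 + (D - R) * s0"
    using DR by (intro real_le_lsqrt) (simp_all add: s0_def s1_def)
  then show ?thesis using DR by (simp add: R_def s0_def s1_def)
qed

definition balanced_partition :: "nat \<Rightarrow> nat \<Rightarrow> nat list" where
  "balanced_partition d T = replicate (T mod d) (Suc (T div d)) @ replicate (d - T mod d) (T div d)"

lemma length_balanced_partition: "0 < d \<Longrightarrow> length (balanced_partition d T) = d"
  by (simp add: balanced_partition_def)

lemma sum_list_balanced_partition: "0 < d \<Longrightarrow> sum_list (balanced_partition d T) = T"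
proof -
  assume "0 < d"
  then have "T mod d * Suc (T div d) + (d - T mod d) * (T div d) = d * (T div d) + T mod d"
    by (simp add: algebra_simps diff_mult_distrib)
  then show ?thesis by (simp add: balanced_partition_def sum_list_replicate)
qed

lemma sqrt_le_sum_mean_abs_walk_balanced:
  assumes "0 < d" "d \<le> T"
  shows "sqrt (real d * real T / 2) \<le> (\<Sum>k\<leftarrow>balanced_partition d T. mean_abs_walk k)"
proof -
  define k where "k = T div d"
  define r where "r = T mod d"
  have "r \<le> d" "1 \<le> k" using assms div_le_mono[OF assms(2), of d] by (simp_all add: r_def k_def)
  have T: "real T = real d * real k + real r" by (simp add: k_def r_def flip: of_nat_mult of_nat_add)
  have "sqrt (real d * real T / 2) \<le> r * sqrt ((k + 2) div 2) + (d - r) * sqrt ((k + 1) div 2)"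
  proof -
    have "k = 2 * (k div 2) \<or> k = Suc (2 * (k div 2))" by presburger
    then show ?thesis
    proof
      assume "k = Suc (2 * (k div 2))"
      moreover have "(k + 1) div 2 = Suc (k div 2)" "(k + 2) div 2 = Suc (k div 2)"
        using calculation by presburger+
      ultimately show ?thesis
        using sqrt_le_balanced_sum_odd[OF \<open>r \<le> d\<close>, of "k div 2"] T by (simp add: ac_simps)
    next
      assume "k = 2 * (k div 2)"
      moreover have "(k + 1) div 2 = k div 2" "(k + 2) div 2 = Suc (k div 2)"
        using calculation by presburger+
      ultimately show ?thesis
        using sqrt_le_balanced_sum_even[OF _ \<open>r \<le> d\<close>, of "k div 2"] \<open>1 \<le> k\<close> T by (simp add: ac_simps)
    qed
  qed
  also have "\<dots> \<le> (\<Sum>k\<leftarrow>balanced_partition d T. mean_abs_walk k)"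
    using mean_abs_walk_ge[of k] mean_abs_walk_ge[of "Suc k"]
    by (simp add: balanced_partition_def sum_list_replicate k_def r_def add_mono mult_left_mono)
  finally show ?thesis .
qed

theorem minimax_regret_ge_sqrt:
  fixes H :: "('x \<Rightarrow> bool) set"
  assumes "H \<noteq> {}" "shatters_depth H d" "d \<le> T"
  shows "sqrt (real d * real T / 8) \<le> minimax_regret T H"
proof (cases "d = 0")
  case True
  then show ?thesis using regret_nonneg[OF _ assms(1)] by (simp add: le_minimax_regret)
next
  case False
  let ?ks = "balanced_partition d T"
  have "sqrt (4 :: real) = 2" by (rule real_sqrt_unique) simp_all
  then have "sqrt (real d * real T / 8) = sqrt (real d * real T / 2) / 2"
    using real_sqrt_divide[of "real d * real T / 2" 4] by simp
  also have "\<dots> \<le> (\<Sum>k\<leftarrow>?ks. mean_abs_walk k) / 2"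
    using sqrt_le_sum_mean_abs_walk_balanced[OF _ assms(3)] False by simp
  finally have "sqrt (real d * real T / 8) \<le> (\<Sum>k\<leftarrow>?ks. mean_abs_walk k) / 2" .
  moreover have "(\<Sum>k\<leftarrow>?ks. mean_abs_walk k) / 2 \<le> regret A T H" if "valid_learner A" for A
    using regret_ge_block_sum[OF that, where H = H and ks = ?ks] assms(2) False
    by (simp add: length_balanced_partition sum_list_balanced_partition)
  ultimately show ?thesis
    by (intro le_minimax_regret) (rule order_trans)
qed

theorem theorem2:
  fixes H :: "('x \<Rightarrow> bool) set" and T d :: nat
  assumes "H \<noteq> {}"
    and "ldim H = enat d"
    and "d \<le> T"
    and "2 \<le> T"
  shows "sqrt (real d * real T / 8) \<le> minimax_regret T H
       \<and> minimax_regret T H \<le> 3 * sqrt (real d * real T * ln (real T))"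
proof
  show "sqrt (real d * real T / 8) \<le> minimax_regret T H"
    using minimax_regret_ge_sqrt[OF assms(1) shatters_depth_ldim[OF assms(1,2)] assms(3)] .
  interpret bounded_ldim H d
    using shatters_depth_le_ldim[OF assms(1,2)] by unfold_locales
  show "minimax_regret T H \<le> 3 * sqrt (real d * real T * ln (real T))"
    using minimax_regret_le_sqrt[OF assms(1,4)] .
qed

end
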